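(* Let $d\ge 1$, $0<a<1/d$, and let $K:\mathbb{R}^d\to\mathbb{R}$ be bounded and integrable with $\int_{\mathbb{R}^d}K(z)\,dz=1$ and $K(z)\to 0$ as $\|z\|\to\infty$. Define $$\psi(u)=\int_{[0,1]\times\mathbb{R}^d}s^{-ad}\Big(e^{s^{ad}\frac{u}{1-ad}K(z)}-1\Big)\,ds\,dz,\qquad I(t)=\sup_{u\in\mathbb{R}}\{ut-\psi(u)\},$$ and $S_+=\{x: K(x)>0\}$, $S_-=\{x:K(x)<0\}$. Let $\lambda$ be Lebesgue measure on $\mathbb{R}^d$. Then: (i) $\psi$ is finite, strictly convex and twice continuously differentiable on $\mathbb{R}$, and $I$ is a good rate function on $\mathbb{R}$ (i.e. $I:\mathbb{R}\to[0,\infty]$ has compact level sets). (ii) If $\lambda(S_-)=0$, then $I(t)=+\infty$ for $t<0$, $I(0)=\lambda(S_+)/(1-ad)$, $I$ is strictly convex on $\mathbb{R}$ and continuous on $]0,+\infty[$, and for every $t>0$, $I(t)=t(\psi')^{-1}(t)-\psi\big((\psi')^{-1}(t)\big)$. (iii) If $\lambda(S_-)>0$, then $I$ is finite and strictly convex on $\mathbb{R}$ and $I(t)=t(\psi')^{-1}(t)-\psi\big((\psi')^{-1}(t)\big)$ for every $t\in\mathbb{R}$. (iv) In both cases, $I(1/(1-ad))=0$ and $1/(1-ad)$ is the unique (strict) minimizer of $I$.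
   Context: $\psi'$ and $(\psi')^{-1}$ denote the derivative of $\psi$ and the inverse function of $\psi'$ on its range. *)

theory Defs
  imports "HOL-Analysis.Analysis"
begin

definition strict_convex_on :: "real set \<Rightarrow> (real \<Rightarrow> real) \<Rightarrow> bool" where
  "strict_convex_on S f \<longleftrightarrow>
     (\<forall>x\<in>S. \<forall>y\<in>S. \<forall>\<theta>::real. x \<noteq> y \<and> 0 < \<theta> \<and> \<theta> < 1 \<longrightarrow>
        f (\<theta> * x + (1 - \<theta>) * y) < \<theta> * f x + (1 - \<theta>) * f y)"

definition ereal_strict_convex :: "(real \<Rightarrow> ereal) \<Rightarrow> bool" where
  "ereal_strict_convex f \<longleftrightarrow>
     (\<forall>x y \<theta>::real. f x < \<infinity> \<and> f y < \<infinity> \<and> x \<noteq> y \<and> 0 < \<theta> \<and> \<theta> < 1 \<longrightarrow>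
        f (\<theta> * x + (1 - \<theta>) * y) < ereal \<theta> * f x + ereal (1 - \<theta>) * f y)"

definition psi_integrand :: "real \<Rightarrow> ('a::euclidean_space \<Rightarrow> real) \<Rightarrow> real \<Rightarrow> real \<times> 'a \<Rightarrow> real" where
  "psi_integrand a K u = (\<lambda>(s, z). s powr (- (a * real DIM('a))) *
      (exp (s powr (a * real DIM('a)) * (u / (1 - a * real DIM('a))) * K z) - 1))"

definition psi :: "real \<Rightarrow> ('a::euclidean_space \<Rightarrow> real) \<Rightarrow> real \<Rightarrow> real" where
  "psi a K u = (LINT p:({0..1} \<times> UNIV)|(lborel \<Otimes>\<^sub>M (lborel :: 'a measure)). psi_integrand a K u p)"

definition rate :: "real \<Rightarrow> ('a::euclidean_space \<Rightarrow> real) \<Rightarrow> real \<Rightarrow> ereal" where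
  "rate a K t = (SUP u\<in>UNIV. ereal (u * t - psi a K u))"

end

(* With p = (s, z), psi u is the integral of A p * (exp (u * B p) - 1), where A = s powr (-ad) and
   B = s powr (ad) * K z / (1 - ad) for 0 < s <= 1. Since B is bounded and A * B is integrable, one
   may differentiate under the integral sign: psi is C^2 with psi'' u = int A B^2 exp (u B) > 0,
   psi 0 = 0 and psi' 0 = int A B = 1 / (1 - ad).
   The rate function I is the Legendre transform of psi, so its properties are governed by the range
   of psi': on that range I t = t u - psi u with psi' u = t, I is strictly convex as soon as the range
   contains every segment between points where I is finite, and psi' 0 is the unique zero of I.
   If K < 0 on a set of positive measure, psi'' is bounded below on both half-lines and psi' is onto.
   If K >= 0 a.e., psi' > 0 tends to 0 at -infinity by dominated convergence, so its range is
   ]0, infinity[; moreover psi <= 0 on ]-infinity, 0], whence I = infinity on ]-infinity, 0[, and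
   I 0 = lim (-psi u) as u -> -infinity, which monotone convergence evaluates to
   lambda(S+) / (1 - ad). *)

theory Submission
  imports Defs
begin

lemma abs_exp_minus_one_le: "\<bar>exp x - 1\<bar> \<le> \<bar>x\<bar> * exp \<bar>x\<bar>" for x :: real
proof -
  have "\<exists>t. \<bar>t\<bar> \<le> \<bar>x\<bar> \<and> exp x = 1 + exp t * x"
    using Maclaurin_exp_le[of x 1] by simp
  then obtain t where "\<bar>t\<bar> \<le> \<bar>x\<bar>" and "exp x - 1 = exp t * x"
    by auto
  then show ?thesis
    by (simp add: abs_mult mult.commute mult_left_mono)
qed

lemma abs_exp_minus_one_minus_le: "\<bar>exp x - 1 - x\<bar> \<le> x\<^sup>2 * exp \<bar>x\<bar>" for x :: real
proof -
  have "\<exists>t. \<bar>t\<bar> \<le> \<bar>x\<bar> \<and> exp x = 1 + x + exp t / 2 * x\<^sup>2"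
    using Maclaurin_exp_le[of x 2] by (simp add: numeral_2_eq_2 power2_eq_square)
  then obtain t where "\<bar>t\<bar> \<le> \<bar>x\<bar>" and remainder: "exp x - 1 - x = exp t / 2 * x\<^sup>2"
    by auto
  then have "exp t / 2 \<le> exp \<bar>x\<bar>"
    using exp_gt_zero[of t] exp_le_cancel_iff[of t "\<bar>x\<bar>"] by linarith
  then have "exp t / 2 * x\<^sup>2 \<le> exp \<bar>x\<bar> * x\<^sup>2"
    by (rule mult_right_mono) simp
  then show ?thesis
    unfolding remainder by (simp add: mult.commute)
qed

lemma exp_mult_le: "\<bar>y\<bar> \<le> b \<Longrightarrow> exp (u * y) \<le> exp (\<bar>u\<bar> * b)" for u y b :: real
  using abs_ge_self[of "u * y"] abs_mult[of u y] mult_left_mono[of "\<bar>y\<bar>" b "\<bar>u\<bar>"] by simp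

lemma exp_neg_mult_tendsto_0: "0 < y \<Longrightarrow> (\<lambda>n. exp (- real n * y)) \<longlonglongrightarrow> 0"
  using LIMSEQ_power_zero[of "exp (- y)"] by (simp add: exp_of_nat_mult[symmetric] mult_ac)

lemma abs_exp_increment_le:
  fixes u h y b :: real
  assumes y: "\<bar>y\<bar> \<le> b" and h: "\<bar>h\<bar> \<le> 1"
  shows "\<bar>exp ((u + h) * y) - exp (u * y) - h * y * exp (u * y)\<bar>
           \<le> h\<^sup>2 * \<bar>y\<bar> * (b * exp ((\<bar>u\<bar> + 1) * b))"
proof -
  have "\<bar>h * y\<bar> \<le> b"
    using mult_mono[OF h y] by (simp add: abs_mult)
  then have "(h * y)\<^sup>2 * exp \<bar>h * y\<bar> \<le> (h * y)\<^sup>2 * exp b"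
    by (intro mult_left_mono) auto
  then have taylor: "\<bar>exp (h * y) - 1 - h * y\<bar> \<le> (h * y)\<^sup>2 * exp b"
    using abs_exp_minus_one_minus_le[of "h * y"] by linarith
  have "exp ((u + h) * y) - exp (u * y) - h * y * exp (u * y) = exp (u * y) * (exp (h * y) - 1 - h * y)"
    by (simp add: distrib_right exp_add algebra_simps)
  then have "\<bar>exp ((u + h) * y) - exp (u * y) - h * y * exp (u * y)\<bar>
      = exp (u * y) * \<bar>exp (h * y) - 1 - h * y\<bar>"
    by (simp add: abs_mult)
  also have "\<dots> \<le> exp (\<bar>u\<bar> * b) * ((h * y)\<^sup>2 * exp b)"
    using exp_mult_le[OF y] taylor by (intro mult_mono) auto
  also have "\<dots> = h\<^sup>2 * \<bar>y\<bar> * (\<bar>y\<bar> * exp ((\<bar>u\<bar> + 1) * b))"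
    by (simp add: power2_eq_square distrib_right exp_add)
  also have "\<dots> \<le> h\<^sup>2 * \<bar>y\<bar> * (b * exp ((\<bar>u\<bar> + 1) * b))"
    using y by (intro mult_left_mono mult_right_mono) auto
  finally show ?thesis .
qed

lemma DERIV_of_quadratic_remainder:
  fixes F :: "real \<Rightarrow> real"
  assumes "\<And>h. \<bar>h\<bar> \<le> 1 \<Longrightarrow> \<bar>F (u + h) - F u - h * D\<bar> \<le> C * h\<^sup>2"
  shows "(F has_real_derivative D) (at u)"
proof -
  have "((\<lambda>h. (F (u + h) - F u) / h - D) \<longlongrightarrow> 0) (at 0)"
  proof (rule Lim_null_comparison)
    have "\<forall>\<^sub>F h in at (0::real). h \<noteq> 0 \<and> \<bar>h\<bar> < 1"
      unfolding eventually_at by (rule exI[of _ 1]) (auto simp: dist_real_def)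
    then show "\<forall>\<^sub>F h in at 0. norm ((F (u + h) - F u) / h - D) \<le> C * \<bar>h\<bar>"
    proof eventually_elim
      case (elim h)
      have "(F (u + h) - F u) / h - D = (F (u + h) - F u - h * D) / h"
        using elim by (simp add: field_simps)
      then have "norm ((F (u + h) - F u) / h - D) = \<bar>F (u + h) - F u - h * D\<bar> / \<bar>h\<bar>"
        by simp
      also have "\<dots> \<le> C * h\<^sup>2 / \<bar>h\<bar>"
        using assms[of h] elim by (intro divide_right_mono) auto
      also have "\<dots> = C * \<bar>h\<bar>"
        using elim by (cases "h < 0") (auto simp: power2_eq_square field_simps)
      finally show ?case .
    qed
    show "((\<lambda>h. C * \<bar>h\<bar>) \<longlongrightarrow> 0) (at 0)"
      by (auto intro!: tendsto_eq_intros)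
  qed
  then show ?thesis
    by (simp add: DERIV_def LIM_zero_iff)
qed

lemma integrable_mult_bounded:
  fixes f g :: "'b \<Rightarrow> real"
  assumes f: "integrable M f" and [measurable]: "g \<in> borel_measurable M"
    and g: "\<And>x. \<bar>g x\<bar> \<le> c"
  shows "integrable M (\<lambda>x. f x * g x)"
proof (rule Bochner_Integration.integrable_bound)
  show "integrable M (\<lambda>x. c * f x)"
    using f by simp
  show "(\<lambda>x. f x * g x) \<in> borel_measurable M"
    using borel_measurable_integrable[OF f] by measurable
  have "\<bar>f x\<bar> * \<bar>g x\<bar> \<le> \<bar>f x\<bar> * \<bar>c\<bar>" for x
    using g[of x] by (intro mult_left_mono) auto
  then show "AE x in M. norm (f x * g x) \<le> norm (c * f x)"
    by (intro AE_I2) (simp add: abs_mult mult.commute)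
qed

lemma integrable_mult_exp:
  fixes g B :: "'b \<Rightarrow> real"
  assumes "integrable M g" and "B \<in> borel_measurable M" and B: "\<And>p. \<bar>B p\<bar> \<le> b"
  shows "integrable M (\<lambda>p. g p * exp (u * B p))"
proof (rule integrable_mult_bounded)
  show "\<bar>exp (u * B p)\<bar> \<le> exp (\<bar>u\<bar> * b)" for p
    using exp_mult_le[OF B] by simp
qed (use assms in auto)

lemma integrable_mult_exp_minus_one:
  fixes A B :: "'b \<Rightarrow> real"
  assumes [measurable]: "A \<in> borel_measurable M" "B \<in> borel_measurable M"
    and B: "\<And>p. \<bar>B p\<bar> \<le> b" and AB: "integrable M (\<lambda>p. A p * B p)"
  shows "integrable M (\<lambda>p. A p * (exp (u * B p) - 1))"
proof (rule Bochner_Integration.integrable_bound)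
  show "integrable M (\<lambda>p. \<bar>u\<bar> * exp (\<bar>u\<bar> * b) * (A p * B p))"
    using AB by simp
  have "\<bar>A p * (exp (u * B p) - 1)\<bar> \<le> \<bar>\<bar>u\<bar> * exp (\<bar>u\<bar> * b) * (A p * B p)\<bar>" for p
  proof -
    have "\<bar>u * B p\<bar> \<le> \<bar>u\<bar> * b"
      using B[of p] by (simp add: abs_mult mult_left_mono)
    then have "\<bar>u * B p\<bar> * exp \<bar>u * B p\<bar> \<le> \<bar>u * B p\<bar> * exp (\<bar>u\<bar> * b)"
      by (intro mult_left_mono) auto
    then have "\<bar>exp (u * B p) - 1\<bar> \<le> \<bar>u * B p\<bar> * exp (\<bar>u\<bar> * b)"
      using abs_exp_minus_one_le[of "u * B p"] by linarith
    then have "\<bar>A p\<bar> * \<bar>exp (u * B p) - 1\<bar> \<le> \<bar>A p\<bar> * (\<bar>u * B p\<bar> * exp (\<bar>u\<bar> * b))"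
      by (rule mult_left_mono) simp
    then show ?thesis
      by (simp add: abs_mult mult_ac)
  qed
  then show "AE p in M. norm (A p * (exp (u * B p) - 1)) \<le> norm (\<bar>u\<bar> * exp (\<bar>u\<bar> * b) * (A p * B p))"
    by (intro AE_I2) simp
qed measurable

lemma has_real_derivative_integral_exp_minus_one:
  fixes A B :: "'b \<Rightarrow> real"
  assumes [measurable]: "A \<in> borel_measurable M" "B \<in> borel_measurable M"
    and B: "\<And>p. \<bar>B p\<bar> \<le> b" and AB: "integrable M (\<lambda>p. A p * B p)"
  shows "((\<lambda>u. \<integral>p. A p * (exp (u * B p) - 1) \<partial>M) has_real_derivative
           (\<integral>p. A p * B p * exp (u * B p) \<partial>M)) (at u)"
proof (rule DERIV_of_quadratic_remainder)
  fix h :: real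
  assume h: "\<bar>h\<bar> \<le> 1"
  define C where "C = b * exp ((\<bar>u\<bar> + 1) * b)"
  define R where "R p = A p * (exp ((u + h) * B p) - 1) - A p * (exp (u * B p) - 1)
                        - h * (A p * B p * exp (u * B p))" for p
  have int: "integrable M (\<lambda>p. A p * (exp (v * B p) - 1))" for v
    using integrable_mult_exp_minus_one[OF assms] .
  have int': "integrable M (\<lambda>p. A p * B p * exp (u * B p))"
    using integrable_mult_exp[OF AB _ B] by simp
  have R_int: "integrable M R"
    unfolding R_def by (intro Bochner_Integration.integrable_diff integrable_mult_right int int')
  have R_le: "\<bar>R p\<bar> \<le> C * h\<^sup>2 * \<bar>A p * B p\<bar>" for p
  proof -
    have "R p = A p * (exp ((u + h) * B p) - exp (u * B p) - h * B p * exp (u * B p))"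
      unfolding R_def by (simp add: algebra_simps)
    then show ?thesis
      using mult_left_mono[OF abs_exp_increment_le[OF B h, of u p] abs_ge_zero[of "A p"]]
      by (simp add: C_def abs_mult mult_ac)
  qed
  have "\<bar>(\<integral>p. A p * (exp ((u + h) * B p) - 1) \<partial>M) - (\<integral>p. A p * (exp (u * B p) - 1) \<partial>M)
          - h * (\<integral>p. A p * B p * exp (u * B p) \<partial>M)\<bar> = \<bar>\<integral>p. R p \<partial>M\<bar>"
    using int int' by (simp add: R_def)
  also have "\<dots> \<le> (\<integral>p. \<bar>R p\<bar> \<partial>M)"
    by (rule integral_abs_bound)
  also have "\<dots> \<le> (\<integral>p. C * h\<^sup>2 * \<bar>A p * B p\<bar> \<partial>M)"
    using R_int AB R_le by (intro integral_mono) auto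
  also have "\<dots> = C * (\<integral>p. \<bar>A p * B p\<bar> \<partial>M) * h\<^sup>2"
    by (simp add: mult_ac)
  finally show "\<bar>(\<integral>p. A p * (exp ((u + h) * B p) - 1) \<partial>M) - (\<integral>p. A p * (exp (u * B p) - 1) \<partial>M)
          - h * (\<integral>p. A p * B p * exp (u * B p) \<partial>M)\<bar> \<le> C * (\<integral>p. \<bar>A p * B p\<bar> \<partial>M) * h\<^sup>2" .
qed

lemma has_real_derivative_integral_mult_exp:
  fixes g B :: "'b \<Rightarrow> real"
  assumes g: "integrable M g" and [measurable]: "B \<in> borel_measurable M"
    and B: "\<And>p. \<bar>B p\<bar> \<le> b"
  shows "((\<lambda>u. \<integral>p. g p * exp (u * B p) \<partial>M) has_real_derivative
           (\<integral>p. g p * B p * exp (u * B p) \<partial>M)) (at u)"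
proof -
  have [measurable]: "g \<in> borel_measurable M"
    using g by auto
  have gB: "integrable M (\<lambda>p. g p * B p)"
    using B by (intro integrable_mult_bounded[OF g]) auto
  have "(\<lambda>u. \<integral>p. g p * exp (u * B p) \<partial>M) = (\<lambda>u. (\<integral>p. g p * (exp (u * B p) - 1) \<partial>M) + (\<integral>p. g p \<partial>M))"
    using integrable_mult_exp_minus_one[OF _ _ B gB] g
    by (simp add: algebra_simps flip: Bochner_Integration.integral_add)
  moreover have "((\<lambda>u. (\<integral>p. g p * (exp (u * B p) - 1) \<partial>M) + (\<integral>p. g p \<partial>M)) has_real_derivative
      (\<integral>p. g p * B p * exp (u * B p) \<partial>M)) (at u)"
    using DERIV_add[OF has_real_derivative_integral_exp_minus_one[OF _ _ B gB] DERIV_const] by simp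
  ultimately show ?thesis
    by simp
qed

lemma integral_pos_if_pos_on:
  fixes f :: "'b \<Rightarrow> real"
  assumes f: "integrable M f" "\<And>p. 0 \<le> f p"
    and E: "E \<in> sets M" "0 < emeasure M E" "\<And>p. p \<in> E \<Longrightarrow> 0 < f p"
  shows "0 < (\<integral>p. f p \<partial>M)"
proof -
  have "\<not> (AE p in M. p \<notin> E)"
    using AE_iff_null_sets[OF E(1)] E(2) by auto
  moreover have "(AE p in M. f p = 0) \<Longrightarrow> (AE p in M. p \<notin> E)"
    by (erule AE_mp) (use E(3) in force)
  ultimately have "\<not> (AE p in M. f p = 0)"
    by blast
  then have "(\<integral>p. f p \<partial>M) \<noteq> 0"
    using integral_nonneg_eq_0_iff_AE[OF f(1)] f(2) by auto
  moreover have "0 \<le> (\<integral>p. f p \<partial>M)"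
    using f(2) by (simp add: integral_nonneg_AE)
  ultimately show ?thesis
    by linarith
qed

lemma (in pair_sigma_finite) integrable_mult_fst_snd:
  fixes f :: "'a \<Rightarrow> real" and g :: "'b \<Rightarrow> real"
  assumes f: "integrable M1 f" and g: "integrable M2 g"
  shows "integrable (M1 \<Otimes>\<^sub>M M2) (\<lambda>p. f (fst p) * g (snd p))"
proof (rule Fubini_integrable)
  have "integrable M1 (\<lambda>x. \<bar>f x\<bar> * (\<integral>y. \<bar>g y\<bar> \<partial>M2))"
    using f by (intro integrable_mult_left integrable_abs)
  then show "integrable M1 (\<lambda>x. \<integral>y. norm (f (fst (x, y)) * g (snd (x, y))) \<partial>M2)"
    by (simp add: abs_mult)
qed (use f g in auto)

lemma (in pair_sigma_finite) integral_mult_fst_snd: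
  fixes f :: "'a \<Rightarrow> real" and g :: "'b \<Rightarrow> real"
  assumes f: "integrable M1 f" and g: "integrable M2 g"
  shows "(\<integral>p. f (fst p) * g (snd p) \<partial>(M1 \<Otimes>\<^sub>M M2)) = (\<integral>x. f x \<partial>M1) * (\<integral>y. g y \<partial>M2)"
  using integral_fst'[OF integrable_mult_fst_snd[OF f g]] by simp

section \<open>Legendre transforms of strictly convex functions\<close>

definition legendre :: "(real \<Rightarrow> real) \<Rightarrow> real \<Rightarrow> ereal" where
  "legendre f t = (SUP u. ereal (u * t - f u))"

lemma legendre_ge: "ereal (u * t - f u) \<le> legendre f t"
  unfolding legendre_def by (rule SUP_upper) simp

lemma legendre_le_iff: "legendre f t \<le> ereal c \<longleftrightarrow> (\<forall>u. u * t - f u \<le> c)"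
  unfolding legendre_def by (simp add: SUP_le_iff)

lemma legendre_neq_minf: "legendre f t \<noteq> - \<infinity>"
  using legendre_ge[of 0 t f] by auto

lemma deriv_eq_if_legendre_attained:
  assumes f: "(f has_real_derivative D) (at u)" and max: "legendre f t = ereal (u * t - f u)"
  shows "D = t"
proof -
  have "((\<lambda>v. v * t - f v) has_real_derivative (t - D)) (at u)"
    using f by (auto intro!: derivative_eq_intros)
  moreover have "v * t - f v \<le> u * t - f u" for v
    using legendre_ge[of v t f] max by simp
  ultimately have "t - D = 0"
    by (intro DERIV_local_max[of _ _ u 1]) auto
  then show ?thesis
    by simp
qed

locale strictly_convex_C2 =
  fixes f f' f'' :: "real \<Rightarrow> real"
  assumes f_deriv: "\<And>u. (f has_real_derivative f' u) (at u)"
    and f'_deriv: "\<And>u. (f' has_real_derivative f'' u) (at u)"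
    and f''_pos: "\<And>u. 0 < f'' u"
begin

lemma deriv_f: "deriv f = f'"
  using f_deriv DERIV_imp_deriv by blast

lemma deriv_f': "deriv f' = f''"
  using f'_deriv DERIV_imp_deriv by blast

lemma continuous_on_f': "continuous_on S f'"
  using f'_deriv by (meson DERIV_isCont continuous_at_imp_continuous_on)

lemma f'_less: "x < y \<Longrightarrow> f' x < f' y"
  using DERIV_pos_imp_increasing[of x y f'] f'_deriv f''_pos by blast

lemma inj_f': "inj f'"
  by (rule injI) (metis f'_less not_less_iff_gr_or_eq)

lemma f'_range_if_between:
  assumes "f' u1 \<le> t" "t \<le> f' u2"
  shows "t \<in> range f'"
proof -
  have "u1 \<le> u2"
    using assms f'_less[of u2 u1] by fastforce
  then show ?thesis
    using IVT'[of f' u1 t u2] assms continuous_on_f' by blast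
qed

lemma f'_unbounded_above:
  assumes c: "0 < c" "\<And>u. 0 \<le> u \<Longrightarrow> c \<le> f'' u"
  shows "\<exists>u. t \<le> f' u"
proof -
  define u where "u = \<bar>t - f' 0\<bar> / c + 1"
  have "0 < u"
    using c by (simp add: u_def add_nonneg_pos)
  then obtain \<xi> where \<xi>: "0 < \<xi>" "f' u - f' 0 = u * f'' \<xi>"
    using MVT2[OF _ f'_deriv, of 0 u] by auto
  have "u * c \<le> u * f'' \<xi>"
    using c(2)[of \<xi>] \<xi>(1) \<open>0 < u\<close> by simp
  moreover have "u * c = \<bar>t - f' 0\<bar> + c"
    using c by (simp add: u_def field_simps)
  ultimately show ?thesis
    using \<xi>(2) c by (intro exI[of _ u]) linarith
qed

lemma f'_unbounded_below:
  assumes c: "0 < c" "\<And>u. u \<le> 0 \<Longrightarrow> c \<le> f'' u"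
  shows "\<exists>u. f' u \<le> t"
proof -
  define u where "u = - (\<bar>t - f' 0\<bar> / c + 1)"
  have "0 \<le> \<bar>t - f' 0\<bar> / c"
    using c by simp
  then have "u < 0"
    by (simp add: u_def)
  then obtain \<xi> where \<xi>: "\<xi> < 0" "f' 0 - f' u = - u * f'' \<xi>"
    using MVT2[OF _ f'_deriv, of u 0] by auto
  have "- u * c \<le> - u * f'' \<xi>"
    using c(2)[of \<xi>] \<xi>(1) \<open>u < 0\<close> by simp
  moreover have "- u * c = \<bar>t - f' 0\<bar> + c"
    using c by (simp add: u_def field_simps)
  ultimately show ?thesis
    using \<xi>(2) c by (intro exI[of _ u]) linarith
qed

lemma tangent_less:
  assumes "w \<noteq> z"
  shows "f z + f' z * (w - z) < f w"
proof (cases "z < w")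
  case True
  then obtain \<xi> where \<xi>: "z < \<xi>" "f w - f z = (w - z) * f' \<xi>"
    using MVT2[OF _ f_deriv, of z w] by auto
  have "(w - z) * f' z < (w - z) * f' \<xi>"
    using f'_less[OF \<xi>(1)] True by simp
  then show ?thesis
    using \<xi>(2) by (simp add: algebra_simps)
next
  case False
  then have "w < z"
    using assms by linarith
  then obtain \<xi> where \<xi>: "\<xi> < z" "f z - f w = (z - w) * f' \<xi>"
    using MVT2[OF _ f_deriv, of w z] by auto
  have "(z - w) * f' \<xi> < (z - w) * f' z"
    using f'_less[OF \<xi>(1)] \<open>w < z\<close> by simp
  then show ?thesis
    using \<xi>(2) by (simp add: algebra_simps)
qed

lemma tangent_le: "f z + f' z * (w - z) \<le> f w"
  using tangent_less[of w z] by (cases "w = z") auto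

lemma strict_convex: "strict_convex_on UNIV f"
  unfolding strict_convex_on_def
proof (intro ballI allI impI, elim conjE)
  fix x y \<theta> :: real
  assume "x \<noteq> y" "0 < \<theta>" "\<theta> < 1"
  define z where "z = \<theta> * x + (1 - \<theta>) * y"
  have "x - z = (1 - \<theta>) * (x - y)" "y - z = \<theta> * (y - x)"
    by (simp_all add: z_def algebra_simps)
  then have "x \<noteq> z" "y \<noteq> z"
    using \<open>x \<noteq> y\<close> \<open>0 < \<theta>\<close> \<open>\<theta> < 1\<close> by auto
  then have "\<theta> * (f z + f' z * (x - z)) < \<theta> * f x"
    and "(1 - \<theta>) * (f z + f' z * (y - z)) < (1 - \<theta>) * f y"
    using tangent_less \<open>0 < \<theta>\<close> \<open>\<theta> < 1\<close> by simp_all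
  moreover have "\<theta> * (f z + f' z * (x - z)) + (1 - \<theta>) * (f z + f' z * (y - z)) = f z"
    by (simp add: z_def algebra_simps)
  ultimately show "f (\<theta> * x + (1 - \<theta>) * y) < \<theta> * f x + (1 - \<theta>) * f y"
    unfolding z_def by linarith
qed

lemma compact_legendre_sublevel: "compact {t. legendre f t \<le> ereal c}"
proof -
  have "{t. legendre f t \<le> ereal c} = {t. \<forall>u. u * t - f u \<le> c}"
    by (simp add: legendre_le_iff)
  moreover have "closed {t. \<forall>u. u * t - f u \<le> c}"
    by (intro closed_Collect_all closed_Collect_le continuous_intros)
  moreover have "{t. \<forall>u. u * t - f u \<le> c} \<subseteq> {- (c + f (-1)) .. c + f 1}"
    by (force dest: spec[of _ 1] spec[of _ "-1"])
  ultimately show ?thesis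
    by (metis bounded_closed_interval bounded_subset compact_eq_bounded_closed)
qed

lemma legendre_at_f': "legendre f (f' u) = ereal (u * f' u - f u)"
proof (rule antisym)
  show "legendre f (f' u) \<le> ereal (u * f' u - f u)"
    unfolding legendre_le_iff using tangent_le[of u] by (simp add: algebra_simps)
qed (rule legendre_ge)

lemma legendre_eq_on_range:
  assumes "t \<in> range f'"
  shows "legendre f t = ereal (t * inv_into UNIV f' t - f (inv_into UNIV f' t))"
  using assms inj_f' by (auto simp: legendre_at_f' mult.commute)

lemma legendre_strict_min:
  assumes "t \<noteq> f' 0"
  shows "legendre f (f' 0) < legendre f t"
proof -
  have min: "legendre f (f' 0) = ereal (0 * t - f 0)"
    using legendre_at_f'[of 0] by simp
  have "legendre f t \<noteq> ereal (0 * t - f 0)"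
    using deriv_eq_if_legendre_attained[OF f_deriv] assms by metis
  then show ?thesis
    using legendre_ge[of 0 t f] min by auto
qed

lemma legendre_strict_convex:
  assumes in_range: "\<And>x y \<theta>. legendre f x < \<infinity> \<Longrightarrow> legendre f y < \<infinity> \<Longrightarrow> x \<noteq> y \<Longrightarrow>
      0 < \<theta> \<Longrightarrow> \<theta> < 1 \<Longrightarrow> \<theta> * x + (1 - \<theta>) * y \<in> range f'"
  shows "ereal_strict_convex (legendre f)"
  unfolding ereal_strict_convex_def
proof (intro allI impI, elim conjE)
  fix x y \<theta> :: real
  assume fin: "legendre f x < \<infinity>" "legendre f y < \<infinity>" and "x \<noteq> y" and \<theta>: "0 < \<theta>" "\<theta> < 1"
  obtain u where u: "\<theta> * x + (1 - \<theta>) * y = f' u"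
    using in_range[OF fin \<open>x \<noteq> y\<close> \<theta>] by blast
  obtain X Y where X: "legendre f x = ereal X" and Y: "legendre f y = ereal Y"
    using fin legendre_neq_minf by (metis less_ereal.simps(2) real_of_ereal.elims)
  have le: "u * x - f u \<le> X" "u * y - f u \<le> Y"
    using legendre_ge[of u x f] legendre_ge[of u y f] X Y by simp_all
  \<comment> \<open>\<open>u\<close> maximises \<open>v * t - f v\<close> only for \<open>t = f' u\<close>, hence for at most one of \<open>x\<close> and \<open>y\<close>.\<close>
  have "u * x - f u < X \<or> u * y - f u < Y"
    using deriv_eq_if_legendre_attained[OF f_deriv, of x u] deriv_eq_if_legendre_attained[OF f_deriv, of y u]
      X Y le \<open>x \<noteq> y\<close> by force
  then have "\<theta> * (u * x - f u) < \<theta> * X \<or> (1 - \<theta>) * (u * y - f u) < (1 - \<theta>) * Y"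
    using \<theta> by auto
  moreover have "\<theta> * (u * x - f u) \<le> \<theta> * X" "(1 - \<theta>) * (u * y - f u) \<le> (1 - \<theta>) * Y"
    using le \<theta> by simp_all
  ultimately have "\<theta> * (u * x - f u) + (1 - \<theta>) * (u * y - f u) < \<theta> * X + (1 - \<theta>) * Y"
    by linarith
  moreover have "\<theta> * (u * x - f u) + (1 - \<theta>) * (u * y - f u) = u * f' u - f u"
    by (simp add: u[symmetric] algebra_simps)
  ultimately show "legendre f (\<theta> * x + (1 - \<theta>) * y) < ereal \<theta> * legendre f x + ereal (1 - \<theta>) * legendre f y"
    by (simp add: u legendre_at_f' X Y)
qed

lemma continuous_on_legendre:
  assumes S: "open S" "convex S" "S \<subseteq> range f'"
  shows "continuous_on S (legendre f)"
proof -
  define g where "g t = t * inv_into UNIV f' t - f (inv_into UNIV f' t)" for t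
  have legendre_g: "legendre f t = ereal (g t)" if "t \<in> S" for t
    using legendre_eq_on_range[of t] that S(3) g_def by auto
  have "convex_on S g"
  proof (rule convex_onI[OF _ S(2)])
    fix s x y :: real
    assume s: "0 < s" "s < 1" and xy: "x \<in> S" "y \<in> S"
    define z where "z = (1 - s) * x + s * y"
    have "z \<in> S"
      using S(2) xy s unfolding z_def convex_def by simp
    then obtain u where u: "z = f' u"
      using S(3) by blast
    have "ereal (g z) = ereal (u * z - f u)"
      using legendre_g[OF \<open>z \<in> S\<close>] legendre_at_f'[of u] by (simp add: u)
    then have "g z = (1 - s) * (u * x - f u) + s * (u * y - f u)"
      by (simp add: z_def algebra_simps)
    also have "\<dots> \<le> (1 - s) * g x + s * g y"
      using legendre_ge[of u x f] legendre_ge[of u y f] legendre_g[OF xy(1)] legendre_g[OF xy(2)] s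
      by (intro add_mono mult_left_mono) auto
    finally show "g ((1 - s) *\<^sub>R x + s *\<^sub>R y) \<le> (1 - s) * g x + s * g y"
      by (simp add: z_def)
  qed
  then have "continuous_on S (\<lambda>t. ereal (g t))"
    by (intro continuous_on_ereal convex_on_continuous[OF S(1)])
  then show ?thesis
    using continuous_on_cong legendre_g by force
qed

end

section \<open>The function psi\<close>

locale psi_kernel =
  fixes K :: "'a::euclidean_space \<Rightarrow> real" and a :: real
  assumes a_pos: "0 < a" and a_less: "a < 1 / real DIM('a)"
    and K_bounded: "bounded (range K)"
    and K_integrable: "integrable lborel K"
    and K_integral: "(\<integral>z. K z \<partial>lborel) = 1"
begin

abbreviation M :: "(real \<times> 'a) measure" where
  "M \<equiv> lborel \<Otimes>\<^sub>M lborel"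

definition \<beta> :: real where
  "\<beta> = a * real DIM('a)"

definition A :: "real \<times> 'a \<Rightarrow> real" where
  "A p = indicator {0..1} (fst p) * fst p powr (- \<beta>)"

definition B :: "real \<times> 'a \<Rightarrow> real" where
  "B p = indicator {0..1} (fst p) * (fst p powr \<beta> * K (snd p) / (1 - \<beta>))"

definition Bmax :: real where
  "Bmax = (SUP z. \<bar>K z\<bar>) / (1 - \<beta>)"

definition psi' :: "real \<Rightarrow> real" where
  "psi' u = (\<integral>p. A p * B p * exp (u * B p) \<partial>M)"

definition psi'' :: "real \<Rightarrow> real" where
  "psi'' u = (\<integral>p. A p * B p * B p * exp (u * B p) \<partial>M)"

lemma \<beta>_pos: "0 < \<beta>" and \<beta>_less_1: "\<beta> < 1"
  using a_pos a_less by (simp_all add: \<beta>_def field_simps)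

lemma K_measurable[measurable]: "K \<in> borel_measurable borel"
  using borel_measurable_integrable[OF K_integrable] by simp

lemma A_measurable[measurable]: "A \<in> borel_measurable M"
  unfolding A_def by measurable

lemma B_measurable[measurable]: "B \<in> borel_measurable M"
  unfolding B_def by measurable

lemma A_nonneg: "0 \<le> A p"
  by (simp add: A_def)

lemma abs_B_le: "\<bar>B p\<bar> \<le> Bmax"
proof -
  obtain k where "\<forall>z. \<bar>K z\<bar> \<le> k"
    using K_bounded by (auto simp: bounded_real)
  then have "\<bar>K (snd p)\<bar> \<le> (SUP z. \<bar>K z\<bar>)"
    by (intro cSUP_upper bdd_aboveI2) auto
  moreover have "fst p powr \<beta> \<le> 1" if "fst p \<in> {0..1}"
    using that \<beta>_pos by (intro powr_le1) auto
  ultimately have "indicator {0..1} (fst p) * (fst p powr \<beta> * \<bar>K (snd p)\<bar>) \<le> (SUP z. \<bar>K z\<bar>)"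
    by (auto simp: indicator_def intro: mult_le_one order_trans[OF mult_right_mono])
  then show ?thesis
    using \<beta>_less_1 by (simp add: B_def Bmax_def abs_mult divide_right_mono)
qed

lemma A_mult_B: "A p * B p = indicator {0<..1} (fst p) * (K (snd p) / (1 - \<beta>))"
proof (cases "fst p \<in> {0<..1}")
  case True
  then have "fst p powr (- \<beta>) * fst p powr \<beta> = 1"
    by (simp add: powr_add[symmetric])
  with True show ?thesis
    by (simp add: A_def B_def algebra_simps)
qed (auto simp: A_def B_def indicator_def)

lemma integrable_A_mult_B: "integrable M (\<lambda>p. A p * B p)"
  and integral_A_mult_B: "(\<integral>p. A p * B p \<partial>M) = 1 / (1 - \<beta>)"
proof -
  have s: "integrable lborel (indicator {0<..1::real} :: real \<Rightarrow> real)"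
    by (rule integrable_real_indicator) auto
  have z: "integrable lborel (\<lambda>z. K z / (1 - \<beta>))"
    using K_integrable by simp
  have AB: "(\<lambda>p. A p * B p) = (\<lambda>p. indicator {0<..1} (fst p) * (K (snd p) / (1 - \<beta>)))"
    by (simp add: A_mult_B)
  show "integrable M (\<lambda>p. A p * B p)"
    unfolding AB by (rule lborel_pair.integrable_mult_fst_snd[OF s z])
  show "(\<integral>p. A p * B p \<partial>M) = 1 / (1 - \<beta>)"
    unfolding AB lborel_pair.integral_mult_fst_snd[OF s z] using K_integral by simp
qed

lemma psi_integrand_eq:
  "indicator ({0..1} \<times> UNIV) p *\<^sub>R psi_integrand a K u p = A p * (exp (u * B p) - 1)"
  by (cases p) (simp add: psi_integrand_def A_def B_def \<beta>_def indicator_def mult_ac)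

lemma psi_eq: "psi a K u = (\<integral>p. A p * (exp (u * B p) - 1) \<partial>M)"
  unfolding psi_def set_lebesgue_integral_def psi_integrand_eq ..

lemma psi_zero: "psi a K 0 = 0"
  by (simp add: psi_eq)

lemma set_integrable_psi_integrand: "set_integrable M ({0..1} \<times> UNIV) (psi_integrand a K u)"
  unfolding set_integrable_def psi_integrand_eq
  using abs_B_le integrable_A_mult_B by (rule integrable_mult_exp_minus_one[OF A_measurable B_measurable])

lemma integrable_ABB: "integrable M (\<lambda>p. A p * B p * B p)"
  using integrable_A_mult_B B_measurable abs_B_le by (rule integrable_mult_bounded)

lemma psi_has_derivative: "(psi a K has_real_derivative psi' u) (at u)"
  using has_real_derivative_integral_exp_minus_one[OF A_measurable B_measurable abs_B_le integrable_A_mult_B]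
  by (simp add: psi_eq[abs_def] psi'_def)

lemma psi'_has_derivative: "(psi' has_real_derivative psi'' u) (at u)"
  using has_real_derivative_integral_mult_exp[OF integrable_A_mult_B B_measurable abs_B_le]
  by (simp add: psi'_def[abs_def] psi''_def)

lemma continuous_psi'': "continuous_on UNIV psi''"
proof -
  have "(psi'' has_real_derivative (\<integral>p. A p * B p * B p * B p * exp (u * B p) \<partial>M)) (at u)" for u
    using has_real_derivative_integral_mult_exp[OF integrable_ABB B_measurable abs_B_le]
    by (simp add: psi''_def[abs_def])
  then show ?thesis
    by (meson DERIV_isCont continuous_at_imp_continuous_on)
qed

lemma psi'_zero: "psi' 0 = 1 / (1 - \<beta>)"
  using integral_A_mult_B by (simp add: psi'_def)

lemma emeasure_strip: "S \<in> sets borel \<Longrightarrow> emeasure M ({0<..1} \<times> S) = emeasure lborel S"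
  using lborel.emeasure_pair_measure_Times[of "{0<..1::real}" lborel S] by simp

lemma B_pos_iff: "0 < B p \<longleftrightarrow> fst p \<in> {0<..1} \<and> 0 < K (snd p)"
  using \<beta>_less_1 by (auto simp: B_def indicator_def zero_less_mult_iff zero_less_divide_iff)

lemma B_neg_iff: "B p < 0 \<longleftrightarrow> fst p \<in> {0<..1} \<and> K (snd p) < 0"
  using \<beta>_less_1 by (auto simp: B_def indicator_def mult_less_0_iff divide_less_0_iff)

lemma sets_B_pos: "{p. 0 < B p} \<in> sets M"
  and sets_B_neg: "{p. B p < 0} \<in> sets M"
proof -
  have "{p \<in> space M. 0 < B p} \<in> sets M" "{p \<in> space M. B p < 0} \<in> sets M"
    by measurable
  then show "{p. 0 < B p} \<in> sets M" "{p. B p < 0} \<in> sets M"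
    by (simp_all add: space_pair_measure)
qed

lemma A_mult_B_mult_B_nonneg: "0 \<le> A p * B p * B p"
  using A_nonneg[of p] by (simp add: mult.assoc)

lemma A_mult_B_mult_B_pos:
  assumes "B p \<noteq> 0"
  shows "0 < A p * B p * B p"
proof -
  have "fst p \<in> {0<..1}"
    using assms B_pos_iff B_neg_iff by (meson linorder_neqE)
  then have "0 < A p"
    by (simp add: A_def)
  moreover have "0 < B p * B p"
    using assms not_real_square_gt_zero by blast
  ultimately show ?thesis
    by (simp add: mult.assoc)
qed

lemma emeasure_B_pos: "0 < emeasure M {p. 0 < B p}"
proof -
  have "\<not> (AE z in lborel. K z \<le> 0)"
  proof
    assume "AE z in lborel. K z \<le> 0"
    then have "AE z in lborel. 0 \<le> - K z"
      by auto
    then have "0 \<le> (\<integral>z. - K z \<partial>lborel)"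
      by (rule integral_nonneg_AE)
    then show False
      using K_integral by simp
  qed
  then have "0 < emeasure lborel {z. 0 < K z}"
    by (subst (asm) AE_iff_measurable[of "{z. 0 < K z}"]) (auto simp: not_le zero_less_iff_neq_zero)
  moreover have "{p. 0 < B p} = {0<..1} \<times> {z. 0 < K z}"
    by (auto simp: B_pos_iff)
  ultimately show ?thesis
    by (simp add: emeasure_strip)
qed

lemma B_neg_set: "{p. B p < 0} = {0<..1} \<times> {z. K z < 0}"
  by (auto simp: B_neg_iff)

lemma emeasure_B_neg: "0 < emeasure lborel {z. K z < 0} \<Longrightarrow> 0 < emeasure M {p. B p < 0}"
  by (simp add: B_neg_set emeasure_strip)

lemma psi''_pos: "0 < psi'' u"
  unfolding psi''_def
proof (rule integral_pos_if_pos_on[of _ _ "{p. 0 < B p}"])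
  show "integrable M (\<lambda>p. A p * B p * B p * exp (u * B p))"
    using integrable_ABB B_measurable abs_B_le by (rule integrable_mult_exp)
  show "0 \<le> A p * B p * B p * exp (u * B p)" for p
    using A_mult_B_mult_B_nonneg[of p] by simp
  show "0 < A p * B p * B p * exp (u * B p)" if "p \<in> {p. 0 < B p}" for p
    using mult_pos_pos[OF A_mult_B_mult_B_pos exp_gt_zero] that by simp
  show "{p. 0 < B p} \<in> sets M"
    by (rule sets_B_pos)
qed (rule emeasure_B_pos)

lemma psi''_uniformly_pos_on:
  assumes E: "E \<in> sets M" "0 < emeasure M E" "E \<subseteq> {p. B p \<noteq> 0}"
  shows "\<exists>c>0. \<forall>u. (\<forall>p\<in>E. 0 \<le> u * B p) \<longrightarrow> c \<le> psi'' u"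
proof (intro exI[of _ "\<integral>p. A p * B p * B p * indicator E p \<partial>M"] conjI allI impI)
  have int: "integrable M (\<lambda>p. A p * B p * B p * indicator E p)"
    using E(1) integrable_ABB by (rule integrable_real_mult_indicator)
  show "0 < (\<integral>p. A p * B p * B p * indicator E p \<partial>M)"
  proof (rule integral_pos_if_pos_on[OF int _ E(1,2)])
    show "0 \<le> A p * B p * B p * indicator E p" for p
      using A_mult_B_mult_B_nonneg[of p] by simp
    show "0 < A p * B p * B p * indicator E p" if "p \<in> E" for p
      using A_mult_B_mult_B_pos[of p] E(3) that by auto
  qed
  fix u
  assume u: "\<forall>p\<in>E. 0 \<le> u * B p"
  have "A p * B p * B p * indicator E p \<le> A p * B p * B p * exp (u * B p)" for p
  proof (cases "p \<in> E")
    case True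
    then have "1 \<le> exp (u * B p)"
      using u by simp
    from mult_left_mono[OF this A_mult_B_mult_B_nonneg[of p]] True show ?thesis
      by simp
  qed (use A_mult_B_mult_B_nonneg[of p] in simp)
  then show "(\<integral>p. A p * B p * B p * indicator E p \<partial>M) \<le> psi'' u"
    unfolding psi''_def
    using integral_mono[OF int integrable_mult_exp[OF integrable_ABB B_measurable abs_B_le]] by blast
qed

lemma psi''_uniformly_pos_right: "\<exists>c>0. \<forall>u\<ge>0. c \<le> psi'' u"
proof -
  have "{p. 0 < B p} \<subseteq> {p. B p \<noteq> 0}"
    by auto
  from psi''_uniformly_pos_on[OF sets_B_pos emeasure_B_pos this]
  obtain c where "0 < c" and c: "\<And>u. \<forall>p\<in>{p. 0 < B p}. 0 \<le> u * B p \<Longrightarrow> c \<le> psi'' u"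
    by blast
  have "c \<le> psi'' u" if "0 \<le> u" for u
    using that by (intro c) simp
  with \<open>0 < c\<close> show ?thesis
    by blast
qed

lemma psi''_uniformly_pos_left:
  assumes "0 < emeasure lborel {z. K z < 0}"
  shows "\<exists>c>0. \<forall>u\<le>0. c \<le> psi'' u"
proof -
  have "{p. B p < 0} \<subseteq> {p. B p \<noteq> 0}"
    by auto
  from psi''_uniformly_pos_on[OF sets_B_neg emeasure_B_neg[OF assms] this]
  obtain c where "0 < c" and c: "\<And>u. \<forall>p\<in>{p. B p < 0}. 0 \<le> u * B p \<Longrightarrow> c \<le> psi'' u"
    by blast
  have "c \<le> psi'' u" if "u \<le> 0" for u
    using that by (intro c) (simp add: mult_nonpos_nonpos)
  with \<open>0 < c\<close> show ?thesis
    by blast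
qed

end

sublocale psi_kernel \<subseteq> strictly_convex_C2 "psi a K" psi' psi''
  using psi_has_derivative psi'_has_derivative psi''_pos by unfold_locales

context psi_kernel
begin

lemma in_range_psi':
  assumes "0 < emeasure lborel {z. K z < 0}"
  shows "t \<in> range psi'"
proof -
  obtain u1 where "psi' u1 \<le> t"
    using psi''_uniformly_pos_left[OF assms] f'_unbounded_below by blast
  moreover obtain u2 where "t \<le> psi' u2"
    using psi''_uniformly_pos_right f'_unbounded_above by blast
  ultimately show ?thesis
    by (rule f'_range_if_between)
qed

lemma legendre_psi_strict_convex_if_negative_part:
  assumes "0 < emeasure lborel {z. K z < 0}"
  shows "ereal_strict_convex (legendre (psi a K))"
  using legendre_strict_convex in_range_psi'[OF assms] by blast

lemma rate_eq_legendre: "rate a K = legendre (psi a K)"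
  by (simp add: fun_eq_iff rate_def legendre_def)

end

section \<open>Kernels that are nonnegative almost everywhere\<close>

locale psi_kernel_nonneg = psi_kernel +
  assumes K_nonneg_ae: "emeasure lborel {z. K z < 0} = 0"
begin

lemma AE_B_nonneg: "AE p in M. 0 \<le> B p"
proof (rule AE_I')
  show "{p. B p < 0} \<in> null_sets M"
    using sets_B_neg K_nonneg_ae by (simp add: null_sets_def B_neg_set emeasure_strip)
qed auto

lemma psi'_nonneg: "0 \<le> psi' u"
proof -
  have "AE p in M. 0 \<le> A p * B p * exp (u * B p)"
    using AE_B_nonneg by eventually_elim (simp add: A_nonneg)
  then show ?thesis
    unfolding psi'_def by (rule integral_nonneg_AE)
qed

lemma psi_nonpos: "u \<le> 0 \<Longrightarrow> psi a K u \<le> 0"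
  using DERIV_nonneg_imp_nondecreasing[of u 0 "psi a K"] f_deriv psi'_nonneg psi_zero by auto

lemma psi_nonneg: "0 \<le> u \<Longrightarrow> 0 \<le> psi a K u"
  using DERIV_nonneg_imp_nondecreasing[of 0 u "psi a K"] f_deriv psi'_nonneg psi_zero by auto

lemma legendre_psi_neg:
  assumes "t < 0"
  shows "legendre (psi a K) t = \<infinity>"
proof (rule ereal_top)
  fix r :: real
  define u where "u = (\<bar>r\<bar> + 1) / t"
  have "u \<le> 0" and "u * t = \<bar>r\<bar> + 1"
    using assms by (simp_all add: u_def divide_nonneg_neg)
  then have "r \<le> u * t - psi a K u"
    using psi_nonpos[of u] by linarith
  then show "ereal r \<le> legendre (psi a K) t"
    using legendre_ge[of u t "psi a K"] by (meson ereal_less_eq(3) order_trans)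
qed

lemma psi'_tendsto_0: "(\<lambda>n. psi' (- real n)) \<longlonglongrightarrow> 0"
proof -
  have "(\<lambda>n. \<integral>p. A p * B p * exp (- real n * B p) \<partial>M) \<longlonglongrightarrow> (\<integral>p. 0 \<partial>M)"
  proof (rule integral_dominated_convergence[where w = "\<lambda>p. \<bar>A p * B p\<bar>"])
    show "AE p in M. (\<lambda>n. A p * B p * exp (- real n * B p)) \<longlonglongrightarrow> 0"
      using AE_B_nonneg
    proof eventually_elim
      case (elim p)
      show ?case
      proof (cases "B p = 0")
        case False
        then show ?thesis
          using tendsto_mult_right_zero[OF exp_neg_mult_tendsto_0, of "B p" "A p * B p"] elim by simp
      qed simp
    qed
    show "AE p in M. norm (A p * B p * exp (- real n * B p)) \<le> \<bar>A p * B p\<bar>" for n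
      using AE_B_nonneg
    proof eventually_elim
      case (elim p)
      then have "exp (- real n * B p) \<le> 1"
        by simp
      then show ?case
        using mult_left_mono[of "exp (- real n * B p)" 1 "\<bar>A p * B p\<bar>"] by (simp add: abs_mult)
    qed
  qed (use integrable_A_mult_B in auto)
  then show ?thesis
    by (simp add: psi'_def)
qed

lemma in_range_psi'_pos:
  assumes "0 < t"
  shows "t \<in> range psi'"
proof -
  obtain n where "psi' (- real n) < t"
    using order_tendstoD(2)[OF psi'_tendsto_0 assms] by (auto simp: eventually_sequentially)
  moreover obtain u where "t \<le> psi' u"
    using psi''_uniformly_pos_right f'_unbounded_above by blast
  ultimately show ?thesis
    using f'_range_if_between[of "- real n" t u] by simp
qed

lemma legendre_psi_strict_convex: "ereal_strict_convex (legendre (psi a K))"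
proof (rule legendre_strict_convex)
  fix x y \<theta> :: real
  assume fin: "legendre (psi a K) x < \<infinity>" "legendre (psi a K) y < \<infinity>"
    and "x \<noteq> y" and \<theta>: "0 < \<theta>" "\<theta> < 1"
  have "0 \<le> x" "0 \<le> y"
    using legendre_psi_neg fin by (metis less_irrefl not_le)+
  then have "0 \<le> \<theta> * x" "0 \<le> (1 - \<theta>) * y" and "0 < \<theta> * x \<or> 0 < (1 - \<theta>) * y"
    using \<open>x \<noteq> y\<close> \<theta> by (auto simp: zero_less_mult_iff)
  then have "0 < \<theta> * x + (1 - \<theta>) * y"
    by linarith
  then show "\<theta> * x + (1 - \<theta>) * y \<in> range psi'"
    by (rule in_range_psi'_pos)
qed

lemma minus_psi_eq_nn_integral:
  assumes "u \<le> 0"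
  shows "ennreal (- psi a K u) = (\<integral>\<^sup>+p. ennreal (A p * (1 - exp (u * B p))) \<partial>M)"
proof -
  have "integrable M (\<lambda>p. - (A p * (exp (u * B p) - 1)))"
    using integrable_mult_exp_minus_one[OF A_measurable B_measurable abs_B_le integrable_A_mult_B]
    by (rule integrable_minus)
  moreover have "AE p in M. 0 \<le> - (A p * (exp (u * B p) - 1))"
    using AE_B_nonneg
  proof eventually_elim
    case (elim p)
    then have "exp (u * B p) \<le> 1"
      using assms by (simp add: mult_nonpos_nonneg)
    then show ?case
      using A_nonneg[of p] by (simp add: mult_nonneg_nonpos)
  qed
  ultimately have "(\<integral>\<^sup>+p. ennreal (- (A p * (exp (u * B p) - 1))) \<partial>M) = ennreal (- psi a K u)"
    by (simp add: nn_integral_eq_integral psi_eq)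
  then show ?thesis
    by (simp add: algebra_simps)
qed

lemma tendsto_minus_psi:
  "(\<lambda>n. ennreal (- psi a K (- real n))) \<longlonglongrightarrow> (\<integral>\<^sup>+p. ennreal (A p * indicator {p. 0 < B p} p) \<partial>M)"
proof -
  define f where "f n p = ennreal (A p * (1 - exp (- real n * B p)))" for n p
  \<comment> \<open>Truncation at \<open>0\<close> by \<open>ennreal\<close> makes the convergence hold everywhere, not only where \<open>B \<ge> 0\<close>.\<close>
  have vanish: "f n p = 0" if "B p \<le> 0" for n p
    using that A_nonneg[of p] by (simp add: f_def ennreal_neg mult_nonneg_nonpos mult_nonpos_nonpos)
  have "(\<lambda>n. integral\<^sup>N M (f n)) \<longlonglongrightarrow> (\<integral>\<^sup>+p. ennreal (A p * indicator {p. 0 < B p} p) \<partial>M)"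
  proof (rule nn_integral_LIMSEQ)
    show "incseq f"
    proof (intro incseq_SucI le_funI)
      fix n p
      show "f n p \<le> f (Suc n) p"
      proof (cases "0 < B p")
        case True
        then have "exp (- real (Suc n) * B p) \<le> exp (- real n * B p)"
          by (simp add: algebra_simps)
        then show ?thesis
          unfolding f_def using A_nonneg[of p] by (intro ennreal_leI mult_left_mono) auto
      qed (simp add: vanish)
    qed
    show "f n \<in> borel_measurable M" for n
      unfolding f_def by measurable
    show "(\<lambda>n. f n p) \<longlonglongrightarrow> ennreal (A p * indicator {p. 0 < B p} p)" for p
    proof (cases "0 < B p")
      case True
      then have "(\<lambda>n. A p * (1 - exp (- real n * B p))) \<longlonglongrightarrow> A p * (1 - 0)"
        by (intro tendsto_intros exp_neg_mult_tendsto_0)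
      with True show ?thesis
        unfolding f_def by (intro tendsto_ennrealI) simp
    qed (simp add: vanish)
  qed
  moreover have "integral\<^sup>N M (f n) = ennreal (- psi a K (- real n))" for n
    using minus_psi_eq_nn_integral[of "- real n"] by (simp add: f_def[abs_def])
  ultimately show ?thesis
    by simp
qed

lemma legendre_psi_zero_eq_nn_integral:
  "legendre (psi a K) 0 = enn2ereal (\<integral>\<^sup>+p. ennreal (A p * indicator {p. 0 < B p} p) \<partial>M)"
proof (rule antisym)
  show "legendre (psi a K) 0 \<le> enn2ereal (\<integral>\<^sup>+p. ennreal (A p * indicator {p. 0 < B p} p) \<partial>M)"
    unfolding legendre_def
  proof (rule SUP_least)
    fix u :: real
    show "ereal (u * 0 - psi a K u) \<le> enn2ereal (\<integral>\<^sup>+p. ennreal (A p * indicator {p. 0 < B p} p) \<partial>M)"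
    proof (cases "u \<le> 0")
      case True
      have "ennreal (A p * (1 - exp (u * B p))) \<le> ennreal (A p * indicator {p. 0 < B p} p)" for p
      proof (cases "0 < B p")
        case True
        then show ?thesis
          using A_nonneg[of p] by (intro ennreal_leI) (simp add: mult_left_le)
      next
        case False
        then have "0 \<le> u * B p"
          using \<open>u \<le> 0\<close> by (simp add: mult_nonpos_nonpos)
        then show ?thesis
          using A_nonneg[of p] by (simp add: ennreal_neg mult_nonneg_nonpos)
      qed
      then have "ennreal (- psi a K u) \<le> (\<integral>\<^sup>+p. ennreal (A p * indicator {p. 0 < B p} p) \<partial>M)"
        unfolding minus_psi_eq_nn_integral[OF True] by (rule nn_integral_mono)
      then show ?thesis
        using psi_nonpos[OF True] by (simp add: less_eq_ennreal.rep_eq)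
    next
      case False
      then have "ereal (u * 0 - psi a K u) \<le> 0"
        using psi_nonneg[of u] by simp
      then show ?thesis
        using enn2ereal_nonneg order_trans by blast
    qed
  qed
  have "legendre (psi a K) 0 \<ge> 0"
    using legendre_ge[of 0 0 "psi a K"] by (simp add: psi_zero zero_ereal_def)
  moreover have "(\<integral>\<^sup>+p. ennreal (A p * indicator {p. 0 < B p} p) \<partial>M) \<le> e2ennreal (legendre (psi a K) 0)"
  proof (rule LIMSEQ_le_const2[OF tendsto_minus_psi], intro exI allI impI)
    fix n :: nat
    show "ennreal (- psi a K (- real n)) \<le> e2ennreal (legendre (psi a K) 0)"
      using e2ennreal_mono[OF legendre_ge[of "- real n" 0 "psi a K"]] by simp
  qed
  ultimately show "enn2ereal (\<integral>\<^sup>+p. ennreal (A p * indicator {p. 0 < B p} p) \<partial>M) \<le> legendre (psi a K) 0"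
    by (metis enn2ereal_e2ennreal less_eq_ennreal.rep_eq)
qed

lemma nn_integral_positive_part:
  "(\<integral>\<^sup>+p. ennreal (A p * indicator {p. 0 < B p} p) \<partial>M) = emeasure lborel {z. 0 < K z} * ennreal (1 / (1 - \<beta>))"
proof -
  have K_pos[measurable]: "{z. 0 < K z} \<in> sets borel"
    by measurable
  have "ennreal (A p * indicator {p. 0 < B p} p)
      = ennreal (fst p powr (- \<beta>)) * indicator {0..1} (fst p) * indicator {z. 0 < K z} (snd p)" for p
    by (cases p) (auto simp: A_def B_pos_iff indicator_def)
  then have "(\<integral>\<^sup>+p. ennreal (A p * indicator {p. 0 < B p} p) \<partial>M)
      = (\<integral>\<^sup>+s. (\<integral>\<^sup>+z. ennreal (s powr (- \<beta>)) * indicator {0..1} s * indicator {z. 0 < K z} z \<partial>lborel) \<partial>lborel)"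
    by (simp add: lborel.nn_integral_fst[symmetric])
  also have "\<dots> = (\<integral>\<^sup>+s. ennreal (s powr (- \<beta>)) * indicator {0..1} s \<partial>lborel) * emeasure lborel {z. 0 < K z}"
    by (simp add: nn_integral_cmult_indicator nn_integral_multc)
  also have "(\<integral>\<^sup>+s. ennreal (s powr (- \<beta>)) * indicator {0..1} s \<partial>lborel) = ennreal (1 / (1 - \<beta>))"
    using has_integral_powr_from_0[of "- \<beta>" 1] \<beta>_less_1 by (intro nn_integral_has_integral_lebesgue') simp_all
  finally show ?thesis
    by (simp add: mult.commute)
qed

lemma legendre_psi_zero:
  "legendre (psi a K) 0 = enn2ereal (emeasure lborel {z. 0 < K z}) / ereal (1 - \<beta>)"
  using \<beta>_less_1
  by (simp add: legendre_psi_zero_eq_nn_integral nn_integral_positive_part times_ennreal.rep_eq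
      divide_ereal_def inverse_eq_divide)

end

theorem proposition1:
  fixes K :: "'a::euclidean_space \<Rightarrow> real" and a :: real
  defines "d \<equiv> real DIM('a)"
  assumes a_pos: "0 < a" and a_lt: "a < 1 / d"
    and K_bounded: "bounded (range K)"
    and K_int: "integrable lborel K"
    and K_one: "(\<integral>z. K z \<partial>lborel) = 1"
    and K_vanish: "(K \<longlongrightarrow> 0) at_infinity"
  shows
    "((\<forall>u. set_integrable (lborel \<Otimes>\<^sub>M (lborel :: 'a measure)) ({0..1} \<times> UNIV) (psi_integrand a K u))
     \<and> strict_convex_on UNIV (psi a K)
     \<and> (\<forall>u. psi a K differentiable at u)
     \<and> (\<forall>u. deriv (psi a K) differentiable at u)
     \<and> continuous_on UNIV (deriv (deriv (psi a K)))
     \<and> (\<forall>t. rate a K t \<ge> 0)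
     \<and> (\<forall>c::real. compact {t. rate a K t \<le> ereal c}))
    \<and> (emeasure lborel {x. K x < 0} = 0 \<longrightarrow>
       (\<forall>t<0. rate a K t = \<infinity>)
     \<and> rate a K 0 = enn2ereal (emeasure lborel {x. K x > 0}) / ereal (1 - a * d)
     \<and> ereal_strict_convex (rate a K)
     \<and> continuous_on {0<..} (rate a K)
     \<and> (\<forall>t>0. t \<in> range (deriv (psi a K)) \<and>
           rate a K t = ereal (t * inv_into UNIV (deriv (psi a K)) t
                               - psi a K (inv_into UNIV (deriv (psi a K)) t))))
    \<and> (emeasure lborel {x. K x < 0} > 0 \<longrightarrow>
       (\<forall>t. rate a K t < \<infinity>)
     \<and> ereal_strict_convex (rate a K)
     \<and> (\<forall>t. t \<in> range (deriv (psi a K)) \<and>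
           rate a K t = ereal (t * inv_into UNIV (deriv (psi a K)) t
                               - psi a K (inv_into UNIV (deriv (psi a K)) t))))
    \<and> (rate a K (1 / (1 - a * d)) = 0
     \<and> (\<forall>t. t \<noteq> 1 / (1 - a * d) \<longrightarrow> rate a K t > rate a K (1 / (1 - a * d))))"
proof -
  interpret psi_kernel K a
    using assms by unfold_locales (simp_all add: d_def)
  have ad: "a * d = \<beta>"
    by (simp add: d_def \<beta>_def)
  have rate: "rate a K = legendre (psi a K)"
    by (rule rate_eq_legendre)
  have minimizer: "1 / (1 - a * d) = psi' 0"
    by (simp add: ad psi'_zero)
  have rate_nonneg: "0 \<le> legendre (psi a K) t" for t
    using legendre_ge[of 0 t "psi a K"] by (simp add: psi_zero zero_ereal_def)
  have "(\<forall>u. set_integrable (lborel \<Otimes>\<^sub>M lborel) ({0..1} \<times> UNIV) (psi_integrand a K u))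
     \<and> strict_convex_on UNIV (psi a K)
     \<and> (\<forall>u. psi a K differentiable at u)
     \<and> (\<forall>u. deriv (psi a K) differentiable at u)
     \<and> continuous_on UNIV (deriv (deriv (psi a K)))
     \<and> (\<forall>t. rate a K t \<ge> 0)
     \<and> (\<forall>c::real. compact {t. rate a K t \<le> ereal c})"
    using set_integrable_psi_integrand strict_convex f_deriv f'_deriv continuous_psi''
      rate_nonneg compact_legendre_sublevel
    by (auto simp: rate deriv_f deriv_f' real_differentiable_def)
  moreover have "(\<forall>t<0. rate a K t = \<infinity>)
     \<and> rate a K 0 = enn2ereal (emeasure lborel {x. K x > 0}) / ereal (1 - a * d)
     \<and> ereal_strict_convex (rate a K)
     \<and> continuous_on {0<..} (rate a K)
     \<and> (\<forall>t>0. t \<in> range (deriv (psi a K)) \<and>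
           rate a K t = ereal (t * inv_into UNIV (deriv (psi a K)) t
                               - psi a K (inv_into UNIV (deriv (psi a K)) t)))"
    if "emeasure lborel {x. K x < 0} = 0"
  proof -
    interpret psi_kernel_nonneg K a
      using that by unfold_locales
    show ?thesis
      using legendre_psi_neg legendre_psi_zero legendre_psi_strict_convex in_range_psi'_pos
        continuous_on_legendre[of "{0<..}"] legendre_eq_on_range
      by (auto simp: rate deriv_f ad)
  qed
  moreover have "(\<forall>t. rate a K t < \<infinity>)
     \<and> ereal_strict_convex (rate a K)
     \<and> (\<forall>t. t \<in> range (deriv (psi a K)) \<and>
           rate a K t = ereal (t * inv_into UNIV (deriv (psi a K)) t
                               - psi a K (inv_into UNIV (deriv (psi a K)) t)))"
    if "emeasure lborel {x. K x < 0} > 0"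
    using in_range_psi'[OF that] legendre_eq_on_range legendre_psi_strict_convex_if_negative_part[OF that]
    by (auto simp: rate deriv_f)
  moreover have "rate a K (1 / (1 - a * d)) = 0
     \<and> (\<forall>t. t \<noteq> 1 / (1 - a * d) \<longrightarrow> rate a K t > rate a K (1 / (1 - a * d)))"
    using legendre_at_f'[of 0] legendre_strict_min by (simp add: rate minimizer psi_zero)
  ultimately show ?thesis
    by blast
qed

end
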